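(* Let $G$ be an almost well-covered graph. Then $G_2$ is a complete graph (equivalently, the vertices of type $2$ are pairwise adjacent).
   Context: All graphs are finite and simple. For a graph $G$, $\alpha(G)$ is the maximum size of an independent set and $i(G)$ the minimum size of an inclusion-maximal independent set; $G$ is almost well-covered if $\alpha(G)-i(G)=1$. Types of vertices: let $U$ be the set of vertices of $G$ whose connected component is a complete graph. In $G-U$, vertices of degree $1$ are leaves and the others are internal vertices. An internal vertex adjacent to exactly $k$ leaves is of type $k$; every vertex of $U$ is of type $0$. $G_2$ denotes the subgraph of $G$ induced by all vertices of type $2$ (the null graph counts as complete). *)

theory Defs
  imports Main
begin

definition graph :: "'a set \<Rightarrow> ('a \<Rightarrow> 'a \<Rightarrow> bool) \<Rightarrow> bool" where
  "graph V E \<longleftrightarrow> finite V \<and> (\<forall>x y. E x y \<longrightarrow> x \<in> V \<and> y \<in> V)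
     \<and> (\<forall>x y. E x y \<longrightarrow> E y x) \<and> (\<forall>x. \<not> E x x)"

definition indep :: "'a set \<Rightarrow> ('a \<Rightarrow> 'a \<Rightarrow> bool) \<Rightarrow> 'a set \<Rightarrow> bool" where
  "indep V E S \<longleftrightarrow> S \<subseteq> V \<and> (\<forall>x\<in>S. \<forall>y\<in>S. \<not> E x y)"

definition maximal_indep :: "'a set \<Rightarrow> ('a \<Rightarrow> 'a \<Rightarrow> bool) \<Rightarrow> 'a set \<Rightarrow> bool" where
  "maximal_indep V E S \<longleftrightarrow> indep V E S \<and> (\<forall>T. indep V E T \<longrightarrow> S \<subseteq> T \<longrightarrow> T = S)"

definition alpha :: "'a set \<Rightarrow> ('a \<Rightarrow> 'a \<Rightarrow> bool) \<Rightarrow> nat" where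
  "alpha V E = Max (card ` {S. indep V E S})"

definition idom :: "'a set \<Rightarrow> ('a \<Rightarrow> 'a \<Rightarrow> bool) \<Rightarrow> nat" where
  "idom V E = Min (card ` {S. maximal_indep V E S})"

definition almost_well_covered :: "'a set \<Rightarrow> ('a \<Rightarrow> 'a \<Rightarrow> bool) \<Rightarrow> bool" where
  "almost_well_covered V E \<longleftrightarrow> alpha V E - idom V E = 1"

definition component :: "('a \<Rightarrow> 'a \<Rightarrow> bool) \<Rightarrow> 'a \<Rightarrow> 'a set" where
  "component E x = {y. E\<^sup>*\<^sup>* x y}"

definition Uset :: "'a set \<Rightarrow> ('a \<Rightarrow> 'a \<Rightarrow> bool) \<Rightarrow> 'a set" where
  "Uset V E = {x \<in> V. \<forall>y\<in>component E x. \<forall>z\<in>component E x. y \<noteq> z \<longrightarrow> E y z}"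

definition degGU :: "'a set \<Rightarrow> ('a \<Rightarrow> 'a \<Rightarrow> bool) \<Rightarrow> 'a \<Rightarrow> nat" where
  "degGU V E x = card {y \<in> V - Uset V E. E x y}"

definition leaf :: "'a set \<Rightarrow> ('a \<Rightarrow> 'a \<Rightarrow> bool) \<Rightarrow> 'a \<Rightarrow> bool" where
  "leaf V E x \<longleftrightarrow> x \<in> V - Uset V E \<and> degGU V E x = 1"

definition internal :: "'a set \<Rightarrow> ('a \<Rightarrow> 'a \<Rightarrow> bool) \<Rightarrow> 'a \<Rightarrow> bool" where
  "internal V E x \<longleftrightarrow> x \<in> V - Uset V E \<and> degGU V E x \<noteq> 1"

definition has_type :: "'a set \<Rightarrow> ('a \<Rightarrow> 'a \<Rightarrow> bool) \<Rightarrow> nat \<Rightarrow> 'a \<Rightarrow> bool" where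
  "has_type V E k x \<longleftrightarrow>
     (internal V E x \<and> card {y. leaf V E y \<and> E x y} = k) \<or> (x \<in> Uset V E \<and> k = 0)"

definition type2 :: "'a set \<Rightarrow> ('a \<Rightarrow> 'a \<Rightarrow> bool) \<Rightarrow> 'a set" where
  "type2 V E = {x. has_type V E 2 x}"

end

theory Submission
  imports Defs
begin

text \<open>Let X be an independent set of vertices outside U and L(X) the set of leaves adjacent
to X. A leaf adjacent to x \<in> X has x as its only neighbour, so in a maximal independent set
W \<supseteq> X one may trade X for L(X); this gives \<open>i(G) + |L(X)| \<le> \<alpha>(G) + |X|\<close>. Two
non-adjacent vertices of type 2 have four distinct leaves, whence \<open>\<alpha>(G) \<ge> i(G) + 2\<close>.\<close>

definition leaf_nbrs :: "'a set \<Rightarrow> ('a \<Rightarrow> 'a \<Rightarrow> bool) \<Rightarrow> 'a set \<Rightarrow> 'a set" where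
  "leaf_nbrs V E X = {l. leaf V E l \<and> (\<exists>x\<in>X. E x l)}"

lemma graph_sym: "graph V E \<Longrightarrow> E x y \<Longrightarrow> E y x"
  and graph_edge_in_V: "graph V E \<Longrightarrow> E x y \<Longrightarrow> x \<in> V \<and> y \<in> V"
  and graph_irrefl: "graph V E \<Longrightarrow> \<not> E x x"
  unfolding graph_def by auto

lemma leaf_nbrs_subset: "leaf_nbrs V E X \<subseteq> V"
  unfolding leaf_nbrs_def leaf_def by auto

lemma component_mono_edge:
  assumes "graph V E" "E x y"
  shows "component E y \<subseteq> component E x"
  using assms unfolding component_def
  by (auto intro: converse_rtranclp_into_rtranclp)

text \<open>A leaf has degree 1 only in G - U, so besides x it could only have a neighbour in U;
but x and that neighbour would lie in the same component, which is then complete, forcing x \<in> U.\<close>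

lemma leaf_unique_neighbour:
  assumes g: "graph V E" and l: "leaf V E l" and "E x l" and xU: "x \<in> V - Uset V E"
    and lz: "E l z"
  shows "z = x"
proof (cases "z \<in> Uset V E")
  case False
  let ?N = "{w \<in> V - Uset V E. E l w}"
  have "card ?N = 1" using l unfolding leaf_def degGU_def by simp
  then obtain w where N: "?N = {w}" by (rule card_1_singletonE)
  have "x \<in> ?N" using xU graph_sym[OF g \<open>E x l\<close>] by simp
  moreover have "z \<in> ?N" using False lz graph_edge_in_V[OF g lz] by simp
  ultimately show ?thesis unfolding N by simp
next
  case True
  have "component E x \<subseteq> component E z"
    using component_mono_edge[OF g graph_sym[OF g lz]] component_mono_edge[OF g graph_sym[OF g \<open>E x l\<close>]]
    by blast
  then have "x \<in> Uset V E" using True xU unfolding Uset_def by blast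
  with xU show ?thesis by simp
qed

lemma finite_leaf_nbrs: "graph V E \<Longrightarrow> finite (leaf_nbrs V E X)"
  using finite_subset[OF leaf_nbrs_subset] unfolding graph_def by blast

lemma leaf_nbrs_disjoint:
  assumes g: "graph V E" and xU: "x \<in> V - Uset V E" and "x \<noteq> y"
  shows "leaf_nbrs V E {x} \<inter> leaf_nbrs V E {y} = {}"
proof -
  have "False" if "leaf V E l" "E x l" "E y l" for l
    using leaf_unique_neighbour[OF g that(1,2) xU graph_sym[OF g that(3)]] \<open>x \<noteq> y\<close> by simp
  then show ?thesis unfolding leaf_nbrs_def by blast
qed

lemma indep_extends_to_maximal:
  assumes "finite V" and "indep V E S"
  obtains W where "S \<subseteq> W" and "maximal_indep V E W"
proof -
  let ?A = "{T. indep V E T \<and> S \<subseteq> T}"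
  have "?A \<subseteq> Pow V" unfolding indep_def by blast
  then have "finite ?A" using assms(1) by (simp add: finite_subset)
  moreover have "?A \<noteq> {}" using assms(2) by blast
  ultimately obtain W where W: "W \<in> ?A" and max: "\<forall>T\<in>?A. W \<subseteq> T \<longrightarrow> W = T"
    by (meson finite_has_maximal)
  have "maximal_indep V E W"
    unfolding maximal_indep_def using W max by blast
  with W show ?thesis using that by blast
qed

lemma card_le_alpha:
  assumes "finite V" and "indep V E S"
  shows "card S \<le> alpha V E"
  unfolding alpha_def
proof (rule Max_ge)
  show "finite (card ` {S. indep V E S})"
    by (rule finite_imageI, rule finite_subset[of _ "Pow V"]) (use assms(1) in \<open>auto simp: indep_def\<close>)
qed (use assms(2) in simp)

lemma idom_le_card:
  assumes "finite V" and "maximal_indep V E S"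
  shows "idom V E \<le> card S"
  unfolding idom_def
proof (rule Min_le)
  show "finite (card ` {S. maximal_indep V E S})"
    by (rule finite_imageI, rule finite_subset[of _ "Pow V"])
      (use assms(1) in \<open>auto simp: maximal_indep_def indep_def\<close>)
qed (use assms(2) in simp)

lemma indep_swap:
  assumes "indep V E W" and "L \<subseteq> V" and "L \<inter> X = {}"
    and nbrs: "\<And>l z. l \<in> L \<Longrightarrow> E l z \<Longrightarrow> z \<in> X" and sym: "\<And>u v. E u v \<Longrightarrow> E v u"
  shows "indep V E ((W - X) \<union> L)"
  unfolding indep_def
proof (intro conjI ballI notI)
  show "(W - X) \<union> L \<subseteq> V" using assms(1,2) unfolding indep_def by blast
next
  fix u v assume u: "u \<in> (W - X) \<union> L" and v: "v \<in> (W - X) \<union> L" and "E u v"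
  then have "u \<notin> L" "v \<notin> L"
    using nbrs sym assms(3) by blast+
  then show False using u v \<open>E u v\<close> assms(1) unfolding indep_def by blast
qed

lemma idom_plus_leaves_le:
  assumes g: "graph V E" and X: "indep V E X" "X \<subseteq> V - Uset V E"
  shows "idom V E + card (leaf_nbrs V E X) \<le> alpha V E + card X"
proof -
  let ?L = "leaf_nbrs V E X"
  have fin: "finite V" using g unfolding graph_def by simp
  obtain W where XW: "X \<subseteq> W" and W: "maximal_indep V E W"
    using indep_extends_to_maximal[OF fin X(1)] by blast
  have Wi: "indep V E W" and finW: "finite W"
    using W fin unfolding maximal_indep_def indep_def by (auto intro: finite_subset)
  have nbrs: "z \<in> X" if l: "l \<in> ?L" and lz: "E l z" for l z
  proof -
    obtain x where "x \<in> X" "E x l" "leaf V E l" using l unfolding leaf_nbrs_def by blast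
    then show ?thesis using leaf_unique_neighbour[OF g _ _ _ lz] X(2) by blast
  qed
  have "l \<notin> W" if l: "l \<in> ?L" for l
  proof
    assume "l \<in> W"
    obtain x where "x \<in> X" "E x l" using l unfolding leaf_nbrs_def by blast
    then show False using Wi XW \<open>l \<in> W\<close> unfolding indep_def by blast
  qed
  then have LW: "?L \<inter> W = {}" by blast
  with XW have "?L \<inter> X = {}" by blast
  then have "indep V E ((W - X) \<union> ?L)"
    by (rule indep_swap[OF Wi leaf_nbrs_subset _ nbrs graph_sym[OF g]])
  then have "card ((W - X) \<union> ?L) \<le> alpha V E" by (rule card_le_alpha[OF fin])
  moreover have "card ((W - X) \<union> ?L) = card W - card X + card ?L"
  proof -
    have "(W - X) \<inter> ?L = {}" using LW by blast
    then have "card ((W - X) \<union> ?L) = card (W - X) + card ?L"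
      using finW finite_leaf_nbrs[OF g] by (simp add: card_Un_disjoint)
    then show ?thesis using XW finW by (simp add: card_Diff_subset finite_subset)
  qed
  moreover have "card X \<le> card W" using XW finW by (rule card_mono[rotated])
  moreover have "idom V E \<le> card W" by (rule idom_le_card[OF fin W])
  ultimately show ?thesis by linarith
qed

lemma type2_leaf_nbrs:
  assumes "x \<in> type2 V E"
  shows "x \<in> V - Uset V E" and "card (leaf_nbrs V E {x}) = 2"
  using assms unfolding type2_def has_type_def internal_def leaf_nbrs_def by auto

theorem lemma7:
  assumes "graph V E"
    and "almost_well_covered V E"
  shows "\<forall>x\<in>type2 V E. \<forall>y\<in>type2 V E. x \<noteq> y \<longrightarrow> E x y"
proof (intro ballI impI, rule ccontr)
  fix x y assume x: "x \<in> type2 V E" and y: "y \<in> type2 V E" and "x \<noteq> y" and "\<not> E x y"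
  note xU = type2_leaf_nbrs(1)[OF x] and yU = type2_leaf_nbrs(1)[OF y]
  have "indep V E {x, y}"
    using xU yU \<open>\<not> E x y\<close> graph_sym[OF assms(1)] graph_irrefl[OF assms(1)]
    unfolding indep_def by blast
  have "card (leaf_nbrs V E {x, y}) = card (leaf_nbrs V E {x} \<union> leaf_nbrs V E {y})"
    unfolding leaf_nbrs_def by (rule arg_cong[where f = card]) blast
  also have "\<dots> = 4"
    using leaf_nbrs_disjoint[OF assms(1) xU \<open>x \<noteq> y\<close>] finite_leaf_nbrs[OF assms(1)]
      type2_leaf_nbrs(2)[OF x] type2_leaf_nbrs(2)[OF y]
    by (simp add: card_Un_disjoint)
  finally have "card (leaf_nbrs V E {x, y}) = 4" .
  moreover have "idom V E + card (leaf_nbrs V E {x, y}) \<le> alpha V E + card {x, y}"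
    by (rule idom_plus_leaves_le[OF assms(1) \<open>indep V E {x, y}\<close>]) (use xU yU in simp)
  moreover have "card {x, y} = 2" using \<open>x \<noteq> y\<close> by simp
  ultimately show False
    using assms(2) unfolding almost_well_covered_def by linarith
qed

end
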